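(* Let $N\ge 2$, $S\ge 1$, $d\ge 1$ be integers. If $d\ge N-1$, then for every next-token distribution $\pi$ on $[N]^S$ we have $d_{KL}(\pi,\mathcal{L}(N,S,d))=0$. Conversely, if $d<N-1$, there exists a next-token distribution $\pi$ on $[N]^S$ such that $d_{KL}(\pi,\mathcal{L}(N,S,d))>0$.
   Context: $[N]=\{1,\dots,N\}$. A next-token distribution $\pi$ consists of a prior probability distribution on $[N]^S$ together with, for each $t_{1:S}\in[N]^S$, a conditional probability distribution $\pi_{t_{1:S}}=\pi(\cdot\mid t_{1:S})$ on $[N]$. For $f:[N]^S\to\mathbb{R}^N$, $d_{KL}(\pi,f):=\mathbb{E}_{t_{1:S}\sim\pi}\big[\mathrm{KL}(\pi_{t_{1:S}}\,\|\,\mathrm{Softmax}(f(t_{1:S})))\big]$. The set of sequence encoders is $\mathcal{L}(N,S,d):=\{f_{W,E}: W\in\mathbb{R}^{N\times d},\ E:[N]^S\to\mathbb{R}^d\}$ with $f_{W,E}(t_{1:S})=W E(t_{1:S})$, and $d_{KL}(\pi,\mathcal{L}(N,S,d)):=\inf_{f\in\mathcal{L}(N,S,d)}d_{KL}(\pi,f)$. *)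

theory Defs
  imports Complex_Main
begin

definition seqs :: "nat \<Rightarrow> nat \<Rightarrow> nat list set" where
  "seqs N S = {t. length t = S \<and> set t \<subseteq> {1..N}}"

definition is_dist_on :: "nat \<Rightarrow> (nat \<Rightarrow> real) \<Rightarrow> bool" where
  "is_dist_on N P \<longleftrightarrow> (\<forall>i\<in>{1..N}. P i \<ge> 0) \<and> (\<Sum>i=1..N. P i) = 1"

text \<open>A next-token distribution: prior p on [N]^S and conditionals q t on [N].\<close>
definition next_token_dist ::
    "nat \<Rightarrow> nat \<Rightarrow> (nat list \<Rightarrow> real) \<Rightarrow> (nat list \<Rightarrow> nat \<Rightarrow> real) \<Rightarrow> bool" where
  "next_token_dist N S p q \<longleftrightarrow>
     (\<forall>t\<in>seqs N S. p t \<ge> 0) \<and> (\<Sum>t\<in>seqs N S. p t) = 1 \<and>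
     (\<forall>t\<in>seqs N S. is_dist_on N (q t))"

definition softmax :: "nat \<Rightarrow> (nat \<Rightarrow> real) \<Rightarrow> nat \<Rightarrow> real" where
  "softmax N v i = exp (v i) / (\<Sum>k=1..N. exp (v k))"

text \<open>KL divergence on [N], with the convention 0 log 0 = 0.\<close>
definition KL :: "nat \<Rightarrow> (nat \<Rightarrow> real) \<Rightarrow> (nat \<Rightarrow> real) \<Rightarrow> real" where
  "KL N P Q = (\<Sum>i\<in>{i\<in>{1..N}. P i \<noteq> 0}. P i * ln (P i / Q i))"

definition dKL ::
    "nat \<Rightarrow> nat \<Rightarrow> (nat list \<Rightarrow> real) \<Rightarrow> (nat list \<Rightarrow> nat \<Rightarrow> real)
      \<Rightarrow> (nat list \<Rightarrow> nat \<Rightarrow> real) \<Rightarrow> real" where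
  "dKL N S p q f = (\<Sum>t\<in>seqs N S. p t * KL N (q t) (softmax N (f t)))"

definition encoder ::
    "nat \<Rightarrow> (nat \<Rightarrow> nat \<Rightarrow> real) \<Rightarrow> (nat list \<Rightarrow> nat \<Rightarrow> real) \<Rightarrow> nat list \<Rightarrow> nat \<Rightarrow> real" where
  "encoder d W E t i = (\<Sum>j=1..d. W i j * E t j)"

definition encoders :: "nat \<Rightarrow> (nat list \<Rightarrow> nat \<Rightarrow> real) set" where
  "encoders d = {encoder d W E | W E. True}"

definition dKL_L ::
    "nat \<Rightarrow> nat \<Rightarrow> nat \<Rightarrow> (nat list \<Rightarrow> real) \<Rightarrow> (nat list \<Rightarrow> nat \<Rightarrow> real) \<Rightarrow> real" where
  "dKL_L N S d p q = (INF f\<in>encoders d. dKL N S p q f)"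

end

theory Submission
  imports Defs "Jordan_Normal_Form.Determinant"
begin

text \<open>If \<open>d \<ge> N - 1\<close>, encoders produce every logit vector up to an additive constant, which
  softmax ignores. Realising the logits \<open>ln (q\<^sub>t i + \<eta>)\<close> yields the smoothed conditionals
  \<open>(q\<^sub>t i + \<eta>) / (1 + N \<eta>)\<close>, whose divergence from \<open>q\<^sub>t\<close> is at most \<open>ln (1 + N \<eta>) \<le> N \<eta>\<close>.

  If \<open>d < N - 1\<close>, the \<open>d\<close> columns of \<open>W\<close> and the all-ones vector span a proper subspace
  of \<open>\<real>\<^sup>N\<close>, so some \<open>a \<noteq> 0\<close> with \<open>\<Sum>\<^sub>i a\<^sub>i = 0\<close> is orthogonal to every logit vector
  \<open>W E(t)\<close>. Take the uniform prior, and let the conditional at \<open>t\<close> give weight \<open>B = exp (2 N)\<close>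
  to the first token of \<open>t\<close> and weight 1 to the others. At the constant sequence \<open>k\<dots>k\<close> with
  \<open>\<bar>a\<^sub>k\<bar>\<close> maximal, pairing \<open>a\<close> with the log-ratios \<open>\<delta>\<^sub>i\<close> between target and softmax gives
  \<open>a\<^sub>k ln B\<close>, so some \<open>\<bar>\<delta>\<^sub>i\<bar> \<ge> 2\<close>, which forces a divergence of at least \<open>1 / (B + N - 1)\<close>
  whatever \<open>E\<close> is.\<close>

lemma finite_seqs: "finite (seqs N S)"
  unfolding seqs_def
  by (rule finite_subset[OF _ finite_lists_length_eq[of "{1..N}" S]]) auto

lemma replicate_in_seqs: "k \<in> {1..N} \<Longrightarrow> replicate S k \<in> seqs N S"
  by (auto simp: seqs_def)

lemma hd_in_tokens:
  assumes "S \<ge> 1" and "t \<in> seqs N S"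
  shows "hd t \<in> {1..N}"
proof -
  have "t \<noteq> []" using assms by (auto simp: seqs_def)
  then show ?thesis using assms(2) hd_in_set[of t] unfolding seqs_def by blast
qed

lemma softmax_pos: "N \<ge> 1 \<Longrightarrow> 0 < softmax N v i"
  unfolding softmax_def by (intro divide_pos_pos sum_pos) auto

lemma sum_softmax: "N \<ge> 1 \<Longrightarrow> (\<Sum>i=1..N. softmax N v i) = 1"
proof -
  assume "N \<ge> 1"
  then have "(\<Sum>k=1..N. exp (v k)) > 0" by (intro sum_pos) auto
  then show ?thesis unfolding softmax_def by (simp add: sum_divide_distrib[symmetric])
qed

lemma softmax_shift_invariant:
  assumes "i \<in> {1..N}" and "\<And>k. k \<in> {1..N} \<Longrightarrow> v k = w k + c"
  shows "softmax N v i = softmax N w i"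
proof -
  have "(\<Sum>k=1..N. exp (v k)) = exp c * (\<Sum>k=1..N. exp (w k))"
    using assms(2) by (simp add: sum_distrib_left exp_add mult.commute)
  then show ?thesis using assms by (simp add: softmax_def exp_add)
qed

lemma KL_cong: "(\<And>i. i \<in> {1..N} \<Longrightarrow> Q i = Q' i) \<Longrightarrow> KL N P Q = KL N P Q'"
  unfolding KL_def by (intro sum.cong) auto

lemma mult_ln_div_ge_diff:
  fixes P Q :: real
  assumes "0 < P" and "0 < Q"
  shows "P - Q \<le> P * ln (P / Q)"
proof -
  have "ln (Q / P) \<le> Q / P - 1" using assms by (intro ln_le_minus_one) auto
  then have "1 - Q / P \<le> ln (P / Q)" using assms by (simp add: ln_div)
  then have "P * (1 - Q / P) \<le> P * ln (P / Q)" using assms by (intro mult_left_mono) auto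
  then show ?thesis using assms by (simp add: right_diff_distrib)
qed

lemma mult_ln_div_ge_diff_add_self:
  fixes P Q :: real
  assumes "0 < P" and "0 < Q" and "2 \<le> \<bar>ln (P / Q)\<bar>"
  shows "P - Q + P \<le> P * ln (P / Q)"
proof -
  define y where "y = ln (P / Q)"
  have Q: "Q = P * exp (- y)" using assms by (simp add: y_def exp_minus field_simps)
  have "1 \<le> y + exp (- y) - 1"
  proof (cases "y \<ge> 2")
    case True
    then show ?thesis using exp_gt_zero[of "- y"] by linarith
  next
    case False
    then have "2 \<le> - y" using assms(3) by (auto simp: y_def)
    then have "1 + (- y) + (- y)\<^sup>2 / 2 \<le> exp (- y)" and "2\<^sup>2 \<le> (- y)\<^sup>2"
      by (intro exp_lower_Taylor_quadratic power_mono; simp)+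
    then show ?thesis by simp
  qed
  then have "P * 1 \<le> P * (y + exp (- y) - 1)" using assms(1) by (intro mult_left_mono) auto
  then show ?thesis unfolding y_def[symmetric] by (simp add: Q algebra_simps)
qed

lemma KL_nonneg:
  assumes P: "is_dist_on N P" and Q: "\<And>i. i \<in> {1..N} \<Longrightarrow> 0 < Q i"
    and Q_mass: "(\<Sum>i=1..N. Q i) \<le> 1"
  shows "0 \<le> KL N P Q"
proof -
  let ?A = "{i\<in>{1..N}. P i \<noteq> 0}"
  have pos: "0 < P i" "0 < Q i" if "i \<in> ?A" for i
    using P Q that by (force simp: is_dist_on_def)+
  have "(\<Sum>i\<in>?A. P i) - (\<Sum>i\<in>?A. Q i) \<le> KL N P Q"
    unfolding KL_def sum_subtractf[symmetric] by (intro sum_mono mult_ln_div_ge_diff pos)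
  moreover have "(\<Sum>i\<in>?A. P i) = (\<Sum>i=1..N. P i)"
    by (intro sum.mono_neutral_left) auto
  moreover have "(\<Sum>i\<in>?A. Q i) \<le> (\<Sum>i=1..N. Q i)"
    using Q by (intro sum_mono2) (auto intro: less_imp_le)
  moreover have "(\<Sum>i=1..N. P i) = 1" using P by (simp add: is_dist_on_def)
  ultimately show ?thesis using Q_mass by linarith
qed

lemma KL_ge_if_large_log_ratio:
  assumes P: "is_dist_on N P" "\<And>i. i \<in> {1..N} \<Longrightarrow> 0 < P i"
    and Q: "\<And>i. i \<in> {1..N} \<Longrightarrow> 0 < Q i" "(\<Sum>i=1..N. Q i) \<le> 1"
    and k: "k \<in> {1..N}" "2 \<le> \<bar>ln (P k / Q k)\<bar>"
  shows "P k \<le> KL N P Q"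
proof -
  have "{i\<in>{1..N}. P i \<noteq> 0} = {1..N}" using P(2) by force
  then have "KL N P Q = (\<Sum>i=1..N. P i * ln (P i / Q i))"
    by (simp add: KL_def)
  also have "\<dots> \<ge> (\<Sum>i=1..N. (P i - Q i) + (if i = k then P k else 0))"
    using mult_ln_div_ge_diff[OF P(2) Q(1)] mult_ln_div_ge_diff_add_self[OF P(2) Q(1)] k(2)
    by (intro sum_mono) auto
  finally show ?thesis using P(1) Q(2) k(1) by (simp add: sum.distrib sum_subtractf is_dist_on_def)
qed

lemma dKL_ge_term:
  assumes "N \<ge> 1" and pq: "next_token_dist N S p q" and t: "t \<in> seqs N S"
  shows "p t * KL N (q t) (softmax N (f t)) \<le> dKL N S p q f"
  unfolding dKL_def
proof (rule member_le_sum[OF t _ finite_seqs])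
  fix t' assume "t' \<in> seqs N S - {t}"
  then show "0 \<le> p t' * KL N (q t') (softmax N (f t'))"
    using pq softmax_pos[OF \<open>N \<ge> 1\<close>] sum_softmax[OF \<open>N \<ge> 1\<close>]
    by (intro mult_nonneg_nonneg KL_nonneg) (auto simp: next_token_dist_def)
qed

lemma dKL_nonneg:
  assumes "N \<ge> 1" and pq: "next_token_dist N S p q"
  shows "0 \<le> dKL N S p q f"
  unfolding dKL_def
  using pq softmax_pos[OF \<open>N \<ge> 1\<close>] sum_softmax[OF \<open>N \<ge> 1\<close>]
  by (intro sum_nonneg mult_nonneg_nonneg KL_nonneg) (auto simp: next_token_dist_def)

lemma dKL_L_greatest:
  "(\<And>f. f \<in> encoders d \<Longrightarrow> c \<le> dKL N S p q f) \<Longrightarrow> c \<le> dKL_L N S d p q"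
  unfolding dKL_L_def by (rule cINF_greatest) (auto simp: encoders_def)

lemma dKL_L_lower:
  assumes "N \<ge> 1" and "next_token_dist N S p q" and "f \<in> encoders d"
  shows "dKL_L N S d p q \<le> dKL N S p q f"
  unfolding dKL_L_def
  using assms dKL_nonneg by (intro cINF_lower bdd_belowI[of _ 0]) auto

subsection \<open>Encoders of width at least \<open>N - 1\<close>\<close>

lemma encoders_realize_logits:
  assumes "N - 1 \<le> d"
  shows "\<exists>f\<in>encoders d. \<forall>t. \<forall>i\<in>{1..N}. f t i = v t i - v t 1"
proof -
  define W :: "nat \<Rightarrow> nat \<Rightarrow> real" where "W i j = (if j = i - 1 then 1 else 0)" for i j
  define E where "E t j = v t (j + 1) - v t 1" for t j
  have "encoder d W E t i = v t i - v t 1" if "i \<in> {1..N}" for t i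
  proof (cases "i = 1")
    case False
    then have "i - 1 \<in> {1..d}" using that assms by auto
    have "encoder d W E t i = (\<Sum>j=1..d. if j = i - 1 then E t j else 0)"
      unfolding encoder_def W_def by (intro sum.cong) auto
    also have "\<dots> = E t (i - 1)" using \<open>i - 1 \<in> {1..d}\<close> by simp
    finally show ?thesis using False that by (simp add: E_def)
  qed (simp add: encoder_def W_def)
  then show ?thesis unfolding encoders_def by blast
qed

lemma softmax_ln_add:
  assumes P: "is_dist_on N P" and "0 < \<eta>" and i: "i \<in> {1..N}"
  shows "softmax N (\<lambda>k. ln (P k + \<eta>)) i = (P i + \<eta>) / (1 + real N * \<eta>)"
proof -
  have pos: "0 < P k + \<eta>" if "k \<in> {1..N}" for k
    using P that \<open>0 < \<eta>\<close> by (auto simp: is_dist_on_def add_nonneg_pos)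
  have "(\<Sum>k=1..N. exp (ln (P k + \<eta>))) = (\<Sum>k=1..N. P k + \<eta>)"
    using pos by (intro sum.cong) auto
  also have "\<dots> = 1 + real N * \<eta>" using P by (simp add: sum.distrib is_dist_on_def)
  finally show ?thesis using pos[OF i] by (simp add: softmax_def)
qed

lemma KL_softmax_ln_add_le:
  assumes P: "is_dist_on N P" and \<eta>: "0 < \<eta>"
  shows "KL N P (softmax N (\<lambda>k. ln (P k + \<eta>))) \<le> real N * \<eta>"
proof -
  let ?A = "{i\<in>{1..N}. P i \<noteq> 0}" and ?M = "1 + real N * \<eta>"
  have M: "0 < ?M" using \<eta> by (simp add: add_pos_nonneg)
  have "KL N P (softmax N (\<lambda>k. ln (P k + \<eta>))) = (\<Sum>i\<in>?A. P i * ln (P i * ?M / (P i + \<eta>)))"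
    unfolding KL_def by (intro sum.cong) (auto simp: softmax_ln_add[OF P \<eta>])
  also have "\<dots> \<le> (\<Sum>i\<in>?A. P i * ln ?M)"
  proof (intro sum_mono mult_left_mono)
    fix i assume "i \<in> ?A"
    then show "0 \<le> P i" using P by (simp add: is_dist_on_def)
    then have "0 < P i + \<eta>" using \<eta> by linarith
    have "?M * P i \<le> ?M * (P i + \<eta>)" using M \<eta> by (intro mult_left_mono) auto
    then have "P i * ?M / (P i + \<eta>) \<le> ?M"
      using \<open>0 < P i + \<eta>\<close> by (simp add: pos_divide_le_eq mult.commute)
    then show "ln (P i * ?M / (P i + \<eta>)) \<le> ln ?M"
      using \<open>0 < P i + \<eta>\<close> \<open>0 \<le> P i\<close> \<open>i \<in> ?A\<close> M by (intro ln_mono) auto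
  qed
  also have "\<dots> = (\<Sum>i\<in>?A. P i) * ln ?M" by (rule sum_distrib_right[symmetric])
  also have "(\<Sum>i\<in>?A. P i) = (\<Sum>i=1..N. P i)"
    by (intro sum.mono_neutral_left) auto
  also have "\<dots> = 1" using P by (simp add: is_dist_on_def)
  also have "1 * ln ?M \<le> real N * \<eta>"
    using \<eta> by (simp add: ln_add_one_self_le_self)
  finally show ?thesis .
qed

lemma dKL_L_eq_0_if_width_ge:
  assumes "N \<ge> 1" and "N - 1 \<le> d" and pq: "next_token_dist N S p q"
  shows "dKL_L N S d p q = 0"
proof (rule antisym)
  show "dKL_L N S d p q \<le> 0"
  proof (rule field_le_epsilon)
    fix \<epsilon> :: real assume "0 < \<epsilon>"
    define \<eta> where "\<eta> = \<epsilon> / real N"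
    have \<eta>: "0 < \<eta>" "real N * \<eta> = \<epsilon>" using \<open>0 < \<epsilon>\<close> \<open>N \<ge> 1\<close> by (auto simp: \<eta>_def)
    obtain f where f: "f \<in> encoders d"
      and logits: "\<And>t i. i \<in> {1..N} \<Longrightarrow> f t i = ln (q t i + \<eta>) - ln (q t 1 + \<eta>)"
      using encoders_realize_logits[OF \<open>N - 1 \<le> d\<close>, of "\<lambda>t i. ln (q t i + \<eta>)"] by auto
    have "KL N (q t) (softmax N (f t)) \<le> \<epsilon>" if "t \<in> seqs N S" for t
    proof -
      have "KL N (q t) (softmax N (f t)) = KL N (q t) (softmax N (\<lambda>i. ln (q t i + \<eta>)))"
        using logits by (intro KL_cong softmax_shift_invariant) auto
      also have "\<dots> \<le> \<epsilon>"
        using KL_softmax_ln_add_le[OF _ \<eta>(1)] pq that \<eta>(2) by (auto simp: next_token_dist_def)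
      finally show ?thesis .
    qed
    then have "dKL N S p q f \<le> (\<Sum>t\<in>seqs N S. p t * \<epsilon>)"
      unfolding dKL_def using pq by (intro sum_mono mult_left_mono) (auto simp: next_token_dist_def)
    also have "\<dots> = \<epsilon>" using pq by (simp add: sum_distrib_right[symmetric] next_token_dist_def)
    finally show "dKL_L N S d p q \<le> 0 + \<epsilon>"
      using dKL_L_lower[OF \<open>N \<ge> 1\<close> pq f] by simp
  qed
  show "0 \<le> dKL_L N S d p q"
    using dKL_nonneg[OF \<open>N \<ge> 1\<close> pq] by (intro dKL_L_greatest)
qed

subsection \<open>Encoders of width below \<open>N - 1\<close>\<close>

lemma homogeneous_system_nontrivial_solution:
  fixes F :: "nat \<Rightarrow> nat \<Rightarrow> 'a :: field"
  assumes "m < n"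
  shows "\<exists>x. (\<exists>i\<in>{1..n}. x i \<noteq> 0) \<and> (\<forall>r<m. (\<Sum>i=1..n. F r i * x i) = 0)"
proof -
  define A where "A = mat\<^sub>r n n (\<lambda>r. if r = n - 1 then 0\<^sub>v n else vec n (\<lambda>c. F r (Suc c)))"
  have "A \<in> carrier_mat n n" by (simp add: A_def)
  moreover have "det A = 0"
    unfolding A_def
  proof (rule det_row_0)
    show "n - 1 < n" using assms by simp
  qed auto
  ultimately obtain v where v: "v \<in> carrier_vec n" "v \<noteq> 0\<^sub>v n" "A *\<^sub>v v = 0\<^sub>v n"
    using det_0_iff_vec_prod_zero_field by blast
  from v(1,2) obtain c where "c < n" "v $ c \<noteq> 0"
    using eq_vecI[of v "0\<^sub>v n"] by auto
  then have "\<exists>i\<in>{1..n}. v $ (i - 1) \<noteq> 0" by (intro bexI[of _ "Suc c"]) auto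
  moreover have "(\<Sum>i=1..n. F r i * v $ (i - 1)) = 0" if "r < m" for r
  proof -
    have "(\<Sum>i=1..n. F r i * v $ (i - 1)) = (\<Sum>c<n. F r (Suc c) * v $ c)"
      by (simp add: sum.atLeast1_atMost_eq)
    also have "\<dots> = (A *\<^sub>v v) $ r"
      using that assms v(1) by (simp add: A_def scalar_prod_def lessThan_atLeast0)
    finally show ?thesis using that assms v(3) by simp
  qed
  ultimately show ?thesis by (intro exI[of _ "\<lambda>i. v $ (i - 1)"]) auto
qed

lemma exists_orthogonal_to_encoder:
  assumes "d + 1 < N"
  shows "\<exists>a. (\<exists>i\<in>{1..N}. a i \<noteq> 0) \<and> (\<Sum>i=1..N. a i) = 0
           \<and> (\<forall>t. (\<Sum>i=1..N. a i * encoder d W E t i) = 0)"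
proof -
  obtain a where a: "\<exists>i\<in>{1..N}. a i \<noteq> 0"
    and eqs: "\<And>r. r < d + 1 \<Longrightarrow> (\<Sum>i=1..N. (if r < d then W i (Suc r) else 1) * a i) = 0"
    using homogeneous_system_nontrivial_solution[OF assms,
        of "\<lambda>r i. if r < d then W i (Suc r) else 1"] by blast
  have W: "(\<Sum>i=1..N. a i * W i j) = 0" if "j \<in> {1..d}" for j
  proof -
    have "j = Suc (j - 1)" "j - 1 < d" using that by auto
    then show ?thesis using eqs[of "j - 1"] by (simp add: mult.commute)
  qed
  have "(\<Sum>i=1..N. a i * encoder d W E t i) = 0" for t
  proof -
    have "(\<Sum>i=1..N. a i * encoder d W E t i) = (\<Sum>i=1..N. \<Sum>j=1..d. a i * W i j * E t j)"
      by (simp add: encoder_def sum_distrib_left mult.assoc)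
    also have "\<dots> = (\<Sum>j=1..d. \<Sum>i=1..N. a i * W i j * E t j)" by (rule sum.swap)
    also have "\<dots> = (\<Sum>j=1..d. (\<Sum>i=1..N. a i * W i j) * E t j)" by (simp add: sum_distrib_right)
    finally show ?thesis using W by simp
  qed
  then show ?thesis using a eqs[of d] by auto
qed

lemma exists_large_of_weighted_sum:
  fixes a \<delta> :: "nat \<Rightarrow> real"
  assumes k: "k \<in> {1..N}" "a k \<noteq> 0" "\<And>i. i \<in> {1..N} \<Longrightarrow> \<bar>a i\<bar> \<le> \<bar>a k\<bar>"
    and sum: "(\<Sum>i=1..N. a i * \<delta> i) = a k * c"
  shows "\<exists>i\<in>{1..N}. \<bar>c\<bar> \<le> real N * \<bar>\<delta> i\<bar>"
proof (rule ccontr)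
  assume "\<not> ?thesis"
  then have "(\<Sum>i=1..N. real N * \<bar>\<delta> i\<bar>) < (\<Sum>i=1..N. \<bar>c\<bar>)"
    using k(1) by (intro sum_strict_mono) (auto simp: not_le)
  then have small: "(\<Sum>i=1..N. \<bar>\<delta> i\<bar>) < \<bar>c\<bar>"
    using k(1) by (simp add: sum_distrib_left[symmetric])
  have "\<bar>a k\<bar> * \<bar>c\<bar> \<le> (\<Sum>i=1..N. \<bar>a i\<bar> * \<bar>\<delta> i\<bar>)"
    using sum_abs[of "\<lambda>i. a i * \<delta> i" "{1..N}"] sum by (simp add: abs_mult)
  also have "\<dots> \<le> \<bar>a k\<bar> * (\<Sum>i=1..N. \<bar>\<delta> i\<bar>)"
    unfolding sum_distrib_left using k(3) by (intro sum_mono mult_right_mono) auto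
  finally show False using small k(2) by simp
qed

definition peaked :: "nat \<Rightarrow> real \<Rightarrow> nat \<Rightarrow> nat \<Rightarrow> real" where
  "peaked N B k i = (if i = k then B else 1) / (B + real N - 1)"

lemma peaked_pos: "N \<ge> 1 \<Longrightarrow> 0 < B \<Longrightarrow> 0 < peaked N B k i"
  unfolding peaked_def by (intro divide_pos_pos) auto

lemma is_dist_on_peaked:
  assumes "k \<in> {1..N}" and "0 < B"
  shows "is_dist_on N (peaked N B k)"
proof -
  have "(\<Sum>i=1..N. if i = k then B else 1) = B + (\<Sum>i\<in>{1..N} - {k}. 1)"
    using assms(1) by (simp add: sum.remove)
  then have "(\<Sum>i=1..N. if i = k then B else 1) = B + real N - 1"
    using assms(1) by (simp add: of_nat_diff)
  then show ?thesis
    using assms peaked_pos[of N B k]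
    by (auto simp: is_dist_on_def peaked_def sum_divide_distrib[symmetric] less_imp_le)
qed

lemma weighted_sum_ln_peaked_div_softmax:
  assumes "k \<in> {1..N}" and "0 < B"
    and "(\<Sum>i=1..N. a i) = 0" and "(\<Sum>i=1..N. a i * v i) = 0"
  shows "(\<Sum>i=1..N. a i * ln (peaked N B k i / softmax N v i)) = a k * ln B"
proof -
  define D where "D = (\<Sum>k=1..N. exp (v k))"
  have "0 < D" unfolding D_def using assms(1) by (intro sum_pos) auto
  have "ln (peaked N B k i) = (if i = k then ln B else 0) - ln (B + real N - 1)" for i
    using assms(1,2) by (simp add: peaked_def ln_div)
  moreover have "ln (softmax N v i) = v i - ln D" for i
    unfolding softmax_def D_def[symmetric] using \<open>0 < D\<close> by (simp add: ln_div)
  ultimately have ln_ratio: "ln (peaked N B k i / softmax N v i) =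
          (if i = k then ln B else 0) + (ln D - ln (B + real N - 1)) - v i" for i
    using assms(1,2) peaked_pos[of N B k i] softmax_pos[of N v i] by (simp add: ln_div)
  have "(\<Sum>i=1..N. a i * ln (peaked N B k i / softmax N v i)) =
      (\<Sum>i=1..N. (if i = k then a k * ln B else 0)
                   + (ln D - ln (B + real N - 1)) * a i - a i * v i)"
    unfolding ln_ratio by (intro sum.cong) (auto simp: algebra_simps)
  also have "\<dots> = a k * ln B
      + (ln D - ln (B + real N - 1)) * (\<Sum>i=1..N. a i) - (\<Sum>i=1..N. a i * v i)"
    using assms(1) by (simp add: sum.distrib sum_subtractf sum_distrib_left)
  finally show ?thesis using assms(3,4) by simp
qed

lemma KL_peaked_encoder_ge:
  assumes "d + 1 < N" and "S \<ge> 1" and "0 < B" and "2 * real N \<le> ln B"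
    and "f \<in> encoders d"
  shows "\<exists>t\<in>seqs N S. 1 / (B + real N - 1) \<le> KL N (peaked N B (hd t)) (softmax N (f t))"
proof -
  obtain W E where f: "f = encoder d W E" using assms(5) by (auto simp: encoders_def)
  obtain a where a: "\<exists>i\<in>{1..N}. a i \<noteq> 0" "(\<Sum>i=1..N. a i) = 0"
    "\<And>t. (\<Sum>i=1..N. a i * f t i) = 0"
    using exists_orthogonal_to_encoder[OF assms(1)] f by blast
  have N: "N \<ge> 1" using assms(1) by simp
  obtain k where k: "k \<in> {1..N}" "Max ((\<lambda>i. \<bar>a i\<bar>) ` {1..N}) = \<bar>a k\<bar>"
    using obtains_MAX[of "{1..N}" "\<lambda>i. \<bar>a i\<bar>"] N by auto
  have max: "\<bar>a i\<bar> \<le> \<bar>a k\<bar>" if "i \<in> {1..N}" for i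
    using that k(2)[symmetric] by (simp add: Max_ge)
  with a(1) have "a k \<noteq> 0" by fastforce
  define t where "t = replicate S k"
  have t: "t \<in> seqs N S" "hd t = k"
    using replicate_in_seqs[OF k(1)] assms(2) by (auto simp: t_def hd_replicate)
  have "(\<Sum>i=1..N. a i * ln (peaked N B k i / softmax N (f t) i)) = a k * ln B"
    using weighted_sum_ln_peaked_div_softmax[OF k(1) assms(3) a(2) a(3)] .
  then have "\<exists>i\<in>{1..N}. \<bar>ln B\<bar> \<le> real N * \<bar>ln (peaked N B k i / softmax N (f t) i)\<bar>"
    by (intro exists_large_of_weighted_sum[where a = a, OF k(1) \<open>a k \<noteq> 0\<close>] max)
  then obtain i where i: "i \<in> {1..N}" "\<bar>ln B\<bar> \<le> real N * \<bar>ln (peaked N B k i / softmax N (f t) i)\<bar>"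
    by blast
  then have "real N * 2 \<le> real N * \<bar>ln (peaked N B k i / softmax N (f t) i)\<bar>"
    using assms(4) by linarith
  then have "2 \<le> \<bar>ln (peaked N B k i / softmax N (f t) i)\<bar>"
    using N by simp
  then have "peaked N B k i \<le> KL N (peaked N B k) (softmax N (f t))"
    using is_dist_on_peaked[OF k(1) assms(3)] peaked_pos[OF N assms(3)]
      softmax_pos[OF N] sum_softmax[OF N] i(1)
    by (intro KL_ge_if_large_log_ratio) auto
  moreover have "1 / (B + real N - 1) \<le> peaked N B k i"
  proof -
    have "0 \<le> ln B" by (rule order_trans[OF _ assms(4)]) simp
    then have "1 \<le> B" using ln_ge_zero_iff[OF assms(3)] by simp
    then show ?thesis using N by (auto simp: peaked_def divide_right_mono)
  qed
  ultimately show ?thesis using t by (intro bexI[of _ t]) simp_all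
qed

lemma dKL_L_pos_if_width_lt:
  assumes "d + 1 < N" and "S \<ge> 1"
  shows "\<exists>p q. next_token_dist N S p q \<and> 0 < dKL_L N S d p q"
proof -
  define B where "B = exp (2 * real N)"
  define K where "K = card (seqs N S)"
  define p where "p t = 1 / real K" for t :: "nat list"
  define q where "q t = peaked N B (hd t)" for t
  have N: "N \<ge> 1" using assms(1) by simp
  have Z: "0 < B + real N - 1"
    using N exp_gt_zero[of "2 * real N"] unfolding B_def by linarith
  have "0 < K"
    using replicate_in_seqs[of 1 N S] N finite_seqs by (auto simp: K_def card_gt_0_iff)
  have "is_dist_on N (q t)" if "t \<in> seqs N S" for t
    using is_dist_on_peaked[OF hd_in_tokens[OF assms(2) that]] by (simp add: q_def B_def)
  then have pq: "next_token_dist N S p q"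
    using \<open>0 < K\<close> by (simp add: next_token_dist_def p_def K_def)
  have "1 / real K * (1 / (B + real N - 1)) \<le> dKL N S p q f" if f: "f \<in> encoders d" for f
  proof -
    obtain t where t: "t \<in> seqs N S" "1 / (B + real N - 1) \<le> KL N (q t) (softmax N (f t))"
      using KL_peaked_encoder_ge[OF assms _ _ f, of B] by (auto simp: B_def q_def)
    then have "p t * (1 / (B + real N - 1)) \<le> p t * KL N (q t) (softmax N (f t))"
      using \<open>0 < K\<close> by (intro mult_left_mono) (auto simp: p_def)
    then show ?thesis using dKL_ge_term[OF N pq t(1), of f] unfolding p_def by linarith
  qed
  then have "1 / real K * (1 / (B + real N - 1)) \<le> dKL_L N S d p q"
    by (rule dKL_L_greatest)
  moreover have "0 < 1 / real K * (1 / (B + real N - 1))"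
    using \<open>0 < K\<close> Z by simp
  ultimately have "0 < dKL_L N S d p q" by linarith
  with pq show ?thesis by blast
qed

theorem proposition2:
  fixes N S d :: nat
  assumes "N \<ge> 2" and "S \<ge> 1" and "d \<ge> 1"
  shows "(d \<ge> N - 1 \<longrightarrow>
            (\<forall>p q. next_token_dist N S p q \<longrightarrow> dKL_L N S d p q = 0))
       \<and> (d < N - 1 \<longrightarrow>
            (\<exists>p q. next_token_dist N S p q \<and> dKL_L N S d p q > 0))"
  using dKL_L_eq_0_if_width_ge[of N d S] dKL_L_pos_if_width_lt[of d N S] assms(1,2) by auto

end
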